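(* Let $n\ge1$, let $\mathcal{S}$ be a discrete subgroup of $O(n+1)$ satisfying the spanning property, let $q\neq0$, and let $\Omega^{(-\infty,q)}$ be a maximizer over $\mathcal{K}_0(\mathcal{S})$ of $$\mathcal{F}_{-\infty,q}(\Omega)=V_q(\Omega)\big/\big(\min_{\mathbb{S}^n}h_\Omega\big)^q.$$ (1) If $q>0$, then $\Omega^{(-\infty,q)}$ is an $\mathcal{S}$-invariant polytope. (2) If $q<0$, then $\Omega^{(-\infty,q)}$ is a ball $B_R\subset\mathbb{R}^{n+1}$ for some $R>0$.
   Context: $\mathcal{K}_0(\mathcal{S})$: convex bodies in $\mathbb{R}^{n+1}$ containing the origin and invariant under all $\phi\in\mathcal{S}$; $h_\Omega$ support function; $r_\Omega(y)=\sup\{\lambda>0:\lambda y\in\Omega\}$ radial function; $V_q(\Omega)=\int_{\mathbb{S}^n}r_\Omega^q(y)\,dy$. Spanning property: for every $a\in\mathbb{S}^n$, $\mathrm{conv}\{\phi(a):\phi\in\mathcal{S}\}$ is a non-degenerate $(n+1)$-dimensional polytope. *)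

theory Defs
  imports "HOL-Analysis.Analysis"
begin

definition orth_subgroup :: "('a::euclidean_space \<Rightarrow> 'a) set \<Rightarrow> bool" where
  "orth_subgroup S \<longleftrightarrow>
     (\<forall>\<phi>\<in>S. orthogonal_transformation \<phi>) \<and> id \<in> S \<and>
     (\<forall>\<phi>\<in>S. \<forall>\<psi>\<in>S. \<phi> \<circ> \<psi> \<in> S) \<and> (\<forall>\<phi>\<in>S. inv \<phi> \<in> S)"

text \<open>Discreteness with respect to the operator norm topology on O(n+1):
  every element has a neighbourhood containing no other element of S.\<close>
definition discrete_orth :: "('a::euclidean_space \<Rightarrow> 'a) set \<Rightarrow> bool" where
  "discrete_orth S \<longleftrightarrow>
     (\<forall>\<phi>\<in>S. \<exists>e>0. \<forall>\<psi>\<in>S. \<psi> \<noteq> \<phi> \<longrightarrow> (\<exists>x. norm x = 1 \<and> e \<le> norm (\<phi> x - \<psi> x)))"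

definition spanning_property :: "('a::euclidean_space \<Rightarrow> 'a) set \<Rightarrow> bool" where
  "spanning_property S \<longleftrightarrow>
     (\<forall>a\<in>sphere 0 1. polytope (convex hull ((\<lambda>\<phi>. \<phi> a) ` S)) \<and>
        aff_dim (convex hull ((\<lambda>\<phi>. \<phi> a) ` S)) = int DIM('a))"

definition K0 :: "('a::euclidean_space \<Rightarrow> 'a) set \<Rightarrow> 'a set set" where
  "K0 S = {\<Omega>. compact \<Omega> \<and> convex \<Omega> \<and> interior \<Omega> \<noteq> {} \<and> 0 \<in> \<Omega> \<and>
                (\<forall>\<phi>\<in>S. \<phi> ` \<Omega> = \<Omega>)}"

definition support_fun :: "'a::euclidean_space set \<Rightarrow> 'a \<Rightarrow> real" where
  "support_fun \<Omega> u = (SUP x\<in>\<Omega>. x \<bullet> u)"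

definition radial_fun :: "'a::euclidean_space set \<Rightarrow> 'a \<Rightarrow> real" where
  "radial_fun \<Omega> y = Sup {t::real. t > 0 \<and> t *\<^sub>R y \<in> \<Omega>}"

text \<open>Integral over the unit sphere S^n w.r.t. the spherical Lebesgue measure, expressed via
  the polar-coordinate (cone measure) identity
  \<open>\<integral>_{S^n} f d\<sigma> = (n+1) \<integral>_{B_1} f(x/|x|) dx\<close>.\<close>
definition sphere_integral :: "('a::euclidean_space \<Rightarrow> real) \<Rightarrow> real" where
  "sphere_integral f = real DIM('a) * (LINT x : ball 0 1 | lborel. f (x /\<^sub>R norm x))"

definition Vq :: "real \<Rightarrow> 'a::euclidean_space set \<Rightarrow> real" where
  "Vq q \<Omega> = sphere_integral (\<lambda>y. radial_fun \<Omega> y powr q)"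

definition F_minf :: "real \<Rightarrow> 'a::euclidean_space set \<Rightarrow> real" where
  "F_minf q \<Omega> = Vq q \<Omega> / (Inf (support_fun \<Omega> ` sphere 0 1)) powr q"

end

theory Submission
  imports Defs
begin

text \<open>
  The orbit of a unit vector under \<open>S\<close> is finite, because its points are extreme points of the
  polytope they span, and its sum is an \<open>S\<close>-fixed vector, hence \<open>0\<close>. Consequently every body of
  \<open>K\<^sub>0(S)\<close> has the origin in its interior: an invariant body lying in a half-space through the
  origin would lie in the hyperplane. Enlarging such a body strictly increases its radial function on
  an open cone of directions, so \<open>V\<^sub>q\<close> strictly increases for \<open>q > 0\<close> and strictly decreases for
  \<open>q < 0\<close>. Let \<open>\<rho> = min h\<^sub>\<Omega>\<close>. For \<open>q < 0\<close> the ball \<open>B\<^sub>\<rho> \<subseteq> \<Omega>\<close> has the same minimal support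
  value, so a maximizer equals \<open>B\<^sub>\<rho>\<close>. For \<open>q > 0\<close>, if \<open>h\<^sub>\<Omega>(u) = \<rho>\<close>, the half-spaces
  \<open>x \<bullet> \<phi> u \<le> \<rho>\<close> for \<open>\<phi> \<in> S\<close>, together with an invariant family of slabs keeping the set
  bounded, cut out an \<open>S\<close>-invariant polytope containing \<open>\<Omega>\<close> with the same minimal support
  value, so a maximizer is that polytope.
\<close>

section \<open>Orbits of a subgroup of \<open>O(n+1)\<close> with the spanning property\<close>

lemma orth_subgroupD:
  assumes "orth_subgroup S"
  shows "\<phi> \<in> S \<Longrightarrow> orthogonal_transformation \<phi>" and "id \<in> S"
    and "\<phi> \<in> S \<Longrightarrow> \<psi> \<in> S \<Longrightarrow> \<phi> \<circ> \<psi> \<in> S" and "\<phi> \<in> S \<Longrightarrow> inv \<phi> \<in> S"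
  using assms unfolding orth_subgroup_def by blast+

lemma orthogonal_transformation_apply_inv:
  fixes \<phi> :: "'a::euclidean_space \<Rightarrow> 'a"
  assumes "orthogonal_transformation \<phi>"
  shows "\<phi> (inv \<phi> y) = y"
  using orthogonal_transformation_surj[OF assms] by (simp add: surj_f_inv_f)

lemma orthogonal_transformation_inner_inv:
  fixes \<phi> :: "'a::euclidean_space \<Rightarrow> 'a"
  assumes "orthogonal_transformation \<phi>"
  shows "\<phi> x \<bullet> y = x \<bullet> inv \<phi> y"
proof -
  have "\<phi> x \<bullet> y = \<phi> x \<bullet> \<phi> (inv \<phi> y)"
    by (simp add: orthogonal_transformation_apply_inv[OF assms])
  also have "\<dots> = x \<bullet> inv \<phi> y"
    using assms unfolding orthogonal_transformation_def by blast
  finally show ?thesis .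
qed

definition orbit :: "('a \<Rightarrow> 'a) set \<Rightarrow> 'a \<Rightarrow> 'a set" where
  "orbit S a = (\<lambda>\<phi>. \<phi> a) ` S"

lemma orbit_subset_sphere:
  "orth_subgroup S \<Longrightarrow> a \<in> sphere 0 1 \<Longrightarrow> orbit S a \<subseteq> sphere 0 1"
  by (auto simp: orbit_def orth_subgroupD orthogonal_transformation_norm)

lemma orth_subgroup_image_eq:
  assumes S: "orth_subgroup S" and closed: "\<And>\<psi> x. \<psi> \<in> S \<Longrightarrow> x \<in> A \<Longrightarrow> \<psi> x \<in> A"
    and \<phi>: "\<phi> \<in> S"
  shows "\<phi> ` A = A"
proof
  show "\<phi> ` A \<subseteq> A" using closed \<phi> by blast
  show "A \<subseteq> \<phi> ` A"
  proof
    fix x assume "x \<in> A"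
    then have "inv \<phi> x \<in> A" using closed orth_subgroupD(4)[OF S \<phi>] by blast
    moreover have "x = \<phi> (inv \<phi> x)"
      using orthogonal_transformation_apply_inv[OF orth_subgroupD(1)[OF S \<phi>]] by simp
    ultimately show "x \<in> \<phi> ` A" by (rule rev_image_eqI)
  qed
qed

lemma image_orbit:
  assumes S: "orth_subgroup S" and \<phi>: "\<phi> \<in> S"
  shows "\<phi> ` orbit S a = orbit S a"
proof (rule orth_subgroup_image_eq[OF S _ \<phi>])
  fix \<psi> x assume "\<psi> \<in> S" "x \<in> orbit S a"
  then obtain \<theta> where "\<theta> \<in> S" "x = \<theta> a" unfolding orbit_def by blast
  then have "\<psi> \<circ> \<theta> \<in> S" "\<psi> x = (\<psi> \<circ> \<theta>) a" using orth_subgroupD(3)[OF S \<open>\<psi> \<in> S\<close>] by auto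
  then show "\<psi> x \<in> orbit S a" unfolding orbit_def by blast
qed

lemma extreme_point_of_convex_hull_sphere:
  fixes A :: "'a::euclidean_space set"
  assumes A: "A \<subseteq> sphere 0 1" and b: "b \<in> A"
  shows "b extreme_point_of convex hull A"
proof -
  have hull: "convex hull A \<subseteq> cball 0 1"
    using A by (intro hull_minimal) auto
  have nb: "norm b = 1" using A b by auto
  have le: "b \<bullet> x \<le> 1" if "x \<in> convex hull A" for x
  proof -
    have "norm x \<le> 1" using hull that by auto
    then show ?thesis using norm_cauchy_schwarz[of b x] nb by simp
  qed
  have "convex hull A \<inter> {x. b \<bullet> x = 1} = {b}"
  proof (intro equalityI subsetI)
    fix x assume x: "x \<in> convex hull A \<inter> {x. b \<bullet> x = 1}"
    have "(norm (x - b))\<^sup>2 = (norm x)\<^sup>2 - 2 * (b \<bullet> x) + (norm b)\<^sup>2"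
      by (simp add: power2_norm_eq_inner inner_diff_left inner_diff_right inner_commute)
    also have "\<dots> \<le> 0"
      using x hull nb by (auto simp: power_le_one)
    finally show "x \<in> {b}" by simp
  qed (use b hull_subset[of A convex] nb in \<open>auto simp: dot_square_norm\<close>)
  moreover have "(convex hull A \<inter> {x. b \<bullet> x = 1}) face_of convex hull A"
    by (rule face_of_Int_supporting_hyperplane_le) (auto intro: le)
  ultimately show ?thesis by (metis face_of_singleton)
qed

lemma finite_if_polytope_convex_hull_sphere:
  fixes A :: "'a::euclidean_space set"
  assumes "A \<subseteq> sphere 0 1" and "polytope (convex hull A)"
  shows "finite A"
proof -
  obtain F where F: "finite F" "convex hull A = convex hull F"
    using assms(2) unfolding polytope_def by blast
  have "A \<subseteq> F"
  proof
    fix b assume "b \<in> A"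
    then have "b extreme_point_of convex hull F"
      using extreme_point_of_convex_hull_sphere[OF assms(1)] F(2) by metis
    then show "b \<in> F" by (rule extreme_point_of_convex_hull)
  qed
  then show ?thesis using F(1) finite_subset by blast
qed

lemma finite_orbit:
  assumes "orth_subgroup S" "spanning_property S" "a \<in> sphere 0 1"
  shows "finite (orbit S a)"
proof (rule finite_if_polytope_convex_hull_sphere[OF orbit_subset_sphere[OF assms(1,3)]])
  show "polytope (convex hull orbit S a)"
    using assms(2,3) unfolding spanning_property_def orbit_def by blast
qed

lemma orth_subgroup_fixed_eq_0:
  assumes S: "orth_subgroup S" and "spanning_property S" and fixed: "\<forall>\<phi>\<in>S. \<phi> v = v"
  shows "v = 0"
proof (rule ccontr)
  assume "v \<noteq> 0"
  define a where "a = v /\<^sub>R norm v"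
  have a: "a \<in> sphere 0 1" using \<open>v \<noteq> 0\<close> by (simp add: a_def)
  have "orbit S a = {a}"
    using S fixed
    by (auto simp: a_def orbit_def orth_subgroupD orthogonal_transformation_scaleR
             intro!: image_eqI[where x=id])
  then show False
    using assms(2) a unfolding spanning_property_def orbit_def by fastforce
qed

lemma sum_orbit_eq_0:
  assumes S: "orth_subgroup S" and "spanning_property S"
  shows "(\<Sum>w\<in>orbit S a. w) = 0"
proof (rule orth_subgroup_fixed_eq_0[OF assms], intro ballI)
  fix \<phi> assume "\<phi> \<in> S"
  then have \<phi>: "orthogonal_transformation \<phi>" by (rule orth_subgroupD[OF S])
  have "\<phi> (\<Sum>w\<in>orbit S a. w) = (\<Sum>w\<in>orbit S a. \<phi> w)"
    using orthogonal_transformation_linear[OF \<phi>] by (simp add: linear_sum)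
  also have "\<dots> = (\<Sum>w\<in>\<phi> ` orbit S a. w)"
    using orthogonal_transformation_inj[OF \<phi>] by (simp add: sum.reindex inj_on_def inj_def)
  finally show "\<phi> (\<Sum>w\<in>orbit S a. w) = (\<Sum>w\<in>orbit S a. w)"
    using image_orbit[OF S \<open>\<phi> \<in> S\<close>] by simp
qed

lemma invariant_halfspace_imp_hyperplane:
  assumes S: "orth_subgroup S" and sp: "spanning_property S" and u: "u \<in> sphere 0 1"
    and inv: "\<forall>\<phi>\<in>S. \<phi> ` \<Omega> \<subseteq> \<Omega>" and half: "\<forall>x\<in>\<Omega>. 0 \<le> u \<bullet> x" and x: "x \<in> \<Omega>"
  shows "u \<bullet> x = 0"
proof -
  have nonneg: "0 \<le> w \<bullet> x" if w: "w \<in> orbit S u" for w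
  proof -
    obtain \<psi> where \<psi>: "\<psi> \<in> S" "w = \<psi> u" using w unfolding orbit_def by blast
    then have "inv \<psi> x \<in> \<Omega>" using orth_subgroupD(4)[OF S] inv x by blast
    then show ?thesis
      using half \<psi> orthogonal_transformation_inner_inv[OF orth_subgroupD(1)[OF S \<psi>(1)]] by simp
  qed
  have "(\<Sum>w\<in>orbit S u. w \<bullet> x) = 0"
    using sum_orbit_eq_0[OF S sp] by (simp flip: inner_sum_left)
  then have "\<forall>w\<in>orbit S u. w \<bullet> x = 0"
    using sum_nonneg_eq_0_iff[OF finite_orbit[OF S sp u], of "\<lambda>w. w \<bullet> x"] nonneg by simp
  moreover have "u \<in> orbit S u"
    unfolding orbit_def using orth_subgroupD(2)[OF S] by (rule rev_image_eqI) simp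
  ultimately show ?thesis by blast
qed

lemma zero_in_interior_K0:
  assumes S: "orth_subgroup S" and sp: "spanning_property S" and \<Omega>: "\<Omega> \<in> K0 S"
  shows "0 \<in> interior \<Omega>"
proof (rule ccontr)
  assume "0 \<notin> interior \<Omega>"
  have K: "convex \<Omega>" "interior \<Omega> \<noteq> {}" "0 \<in> \<Omega>" "\<forall>\<phi>\<in>S. \<phi> ` \<Omega> \<subseteq> \<Omega>"
    using \<Omega> unfolding K0_def by auto
  have "0 \<in> closure \<Omega>" using K(3) closure_subset by blast
  moreover have "0 \<notin> rel_interior \<Omega>"
    using \<open>0 \<notin> interior \<Omega>\<close> K(2) by (simp add: rel_interior_nonempty_interior)
  ultimately obtain a where a: "a \<noteq> 0" "\<And>y. y \<in> closure \<Omega> \<Longrightarrow> a \<bullet> 0 \<le> a \<bullet> y"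
    by (rule supporting_hyperplane_relative_frontier[OF K(1)]) blast
  define u where "u = a /\<^sub>R norm a"
  have "norm u = 1" using a(1) by (simp add: u_def)
  then have u: "u \<in> sphere 0 1" and "u \<noteq> 0" by auto
  have half: "\<forall>x\<in>\<Omega>. 0 \<le> u \<bullet> x"
    using a(2)[OF subsetD[OF closure_subset]] by (simp add: u_def)
  have "\<Omega> \<subseteq> {x. u \<bullet> x = 0}"
    using invariant_halfspace_imp_hyperplane[OF S sp u K(4) half] by blast
  then have "interior \<Omega> \<subseteq> interior {x. u \<bullet> x = 0}" by (rule interior_mono)
  then show False using K(2) \<open>u \<noteq> 0\<close> by simp
qed

section \<open>Radial functions and strict monotonicity of \<open>V\<^sub>q\<close>\<close>

lemma bdd_above_radial_set:
  fixes K :: "'a::euclidean_space set"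
  assumes "compact K" and "y \<noteq> 0"
  shows "bdd_above {t. 0 < t \<and> t *\<^sub>R y \<in> K}"
proof -
  obtain B where B: "\<forall>x\<in>K. norm x \<le> B"
    using compact_imp_bounded[OF assms(1)] bounded_iff by blast
  show ?thesis
  proof (rule bdd_aboveI)
    fix t assume "t \<in> {t. 0 < t \<and> t *\<^sub>R y \<in> K}"
    then have "t * norm y \<le> B" using B by fastforce
    then show "t \<le> B / norm y" using assms(2) by (simp add: field_simps)
  qed
qed

lemma le_radial_fun:
  fixes K :: "'a::euclidean_space set"
  assumes "compact K" and "y \<noteq> 0" and "0 < t" and "t *\<^sub>R y \<in> K"
  shows "t \<le> radial_fun K y"
  unfolding radial_fun_def using assms by (intro cSup_upper bdd_above_radial_set) auto

lemma radial_fun_pos_mem: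
  fixes K :: "'a::euclidean_space set"
  assumes K: "compact K" "0 \<in> interior K" and y: "y \<noteq> 0"
  shows "0 < radial_fun K y" and "radial_fun K y *\<^sub>R y \<in> K"
proof -
  define T where "T = {t. 0 < t \<and> t *\<^sub>R y \<in> K}"
  obtain e where e: "0 < e" "ball 0 e \<subseteq> K" using K(2) mem_interior by blast
  define t0 where "t0 = e / (2 * norm y)"
  have "norm (t0 *\<^sub>R y) < e" using e y by (simp add: t0_def)
  then have "t0 \<in> T" using e y by (auto simp: T_def t0_def)
  then show "0 < radial_fun K y"
    using le_radial_fun[OF K(1) y] by (fastforce simp: T_def)
  have "radial_fun K y \<in> closure T"
    unfolding radial_fun_def T_def
    using \<open>t0 \<in> T\<close> bdd_above_radial_set[OF K(1) y] by (intro closure_contains_Sup) (auto simp: T_def)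
  moreover have "closed ((\<lambda>t::real. t *\<^sub>R y) -` K)"
    by (intro closed_vimage compact_imp_closed K(1) continuous_intros)
  moreover have "T \<subseteq> (\<lambda>t. t *\<^sub>R y) -` K" by (auto simp: T_def)
  ultimately show "radial_fun K y *\<^sub>R y \<in> K"
    using closure_minimal by blast
qed

lemma scaleR_mem_iff_le_radial_fun:
  fixes K :: "'a::euclidean_space set"
  assumes K: "compact K" "convex K" "0 \<in> interior K" and y: "y \<noteq> 0" and t: "0 < t"
  shows "t *\<^sub>R y \<in> K \<longleftrightarrow> t \<le> radial_fun K y"
proof
  assume "t \<le> radial_fun K y"
  moreover note r = radial_fun_pos_mem[OF K(1,3) y]
  moreover have "0 \<in> K" using K(3) interior_subset by blast
  ultimately have "(t / radial_fun K y) *\<^sub>R (radial_fun K y *\<^sub>R y) + (1 - t / radial_fun K y) *\<^sub>R 0 \<in> K"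
    using t by (intro convexD[OF K(2)]) auto
  then show "t *\<^sub>R y \<in> K" using r(1) by simp
qed (rule le_radial_fun[OF K(1) y t])

lemma radial_fun_powr_mono:
  fixes K1 K2 :: "'a::euclidean_space set"
  assumes K1: "compact K1" "0 \<in> interior K1" and "compact K2" and "K1 \<subseteq> K2"
  shows "0 < q \<Longrightarrow> radial_fun K1 y powr q \<le> radial_fun K2 y powr q"
    and "q < 0 \<Longrightarrow> radial_fun K2 y powr q \<le> radial_fun K1 y powr q"
proof -
  have "0 \<in> K1" "0 \<in> K2" using K1(2) interior_subset assms(4) by blast+
  have "radial_fun K1 y = radial_fun K2 y \<or> 0 < radial_fun K1 y \<and> radial_fun K1 y \<le> radial_fun K2 y"
  proof (cases "y = 0")
    case True
    \<comment> \<open>both sides are the junk value \<open>Sup {t. 0 < t}\<close>\<close>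
    then show ?thesis using \<open>0 \<in> K1\<close> \<open>0 \<in> K2\<close> by (simp add: radial_fun_def)
  next
    case False
    then show ?thesis
      using radial_fun_pos_mem[OF K1 False] le_radial_fun[OF assms(3) False] assms(4) by blast
  qed
  then show "0 < q \<Longrightarrow> radial_fun K1 y powr q \<le> radial_fun K2 y powr q"
    and "q < 0 \<Longrightarrow> radial_fun K2 y powr q \<le> radial_fun K1 y powr q"
    by (auto intro: powr_mono2 powr_mono2')
qed

lemma radial_fun_less_if_mem_diff:
  fixes K1 K2 :: "'a::euclidean_space set"
  assumes K1: "compact K1" "convex K1" "0 \<in> interior K1" and "compact K2"
    and z: "z \<in> K2" "z \<notin> K1"
  shows "radial_fun K1 (z /\<^sub>R norm z) < radial_fun K2 (z /\<^sub>R norm z)"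
proof -
  have "z \<noteq> 0" using K1(3) interior_subset z(2) by blast
  define y where "y = z /\<^sub>R norm z"
  have "y \<noteq> 0" and zy: "norm z *\<^sub>R y = z" using \<open>z \<noteq> 0\<close> by (auto simp: y_def)
  have "norm z \<le> radial_fun K2 y"
    using le_radial_fun[OF assms(4) \<open>y \<noteq> 0\<close>] \<open>z \<noteq> 0\<close> zy z(1) by simp
  moreover have "\<not> norm z \<le> radial_fun K1 y"
    using scaleR_mem_iff_le_radial_fun[OF K1 \<open>y \<noteq> 0\<close>, of "norm z"] \<open>z \<noteq> 0\<close> zy z(2) by simp
  ultimately show ?thesis unfolding y_def by simp
qed

lemma radial_fun_borel_measurable:
  fixes K :: "'a::euclidean_space set"
  assumes K: "compact K" "convex K" "0 \<in> interior K"
  shows "radial_fun K \<in> borel_measurable borel"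
proof (unfold borel_measurable_iff_ge, intro allI)
  fix a :: real
  have iff: "a \<le> radial_fun K w \<longleftrightarrow> a \<le> 0 \<or> a *\<^sub>R w \<in> K" if "w \<noteq> 0" for w
    using radial_fun_pos_mem(1)[OF K(1,3) that] scaleR_mem_iff_le_radial_fun[OF K that, of a]
    by (cases "a \<le> 0") auto
  have eq: "{w \<in> space borel. a \<le> radial_fun K w} =
      (- {0} \<inter> {w. a \<le> 0 \<or> a *\<^sub>R w \<in> K}) \<union> {w. w = 0 \<and> a \<le> radial_fun K 0}"
    (is "?L = ?R")
  proof (intro set_eqI)
    show "w \<in> ?L \<longleftrightarrow> w \<in> ?R" for w by (cases "w = 0") (use iff in auto)
  qed
  have "- {0} \<in> sets (borel :: 'a measure)" by (intro borel_open) auto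
  moreover have "{w::'a. a \<le> 0 \<or> a *\<^sub>R w \<in> K} \<in> sets borel"
  proof (cases "a \<le> 0")
    case False
    have "closed ((\<lambda>w::'a. a *\<^sub>R w) -` K)"
      by (intro closed_vimage compact_imp_closed K(1) continuous_intros)
    then show ?thesis using False by (simp add: vimage_def borel_closed)
  qed simp
  moreover have "{w::'a. w = 0 \<and> a \<le> radial_fun K 0} \<in> sets borel"
  proof (cases "a \<le> radial_fun K 0")
    case True
    then have "{w::'a. w = 0 \<and> a \<le> radial_fun K 0} = {0}" by auto
    then show ?thesis by simp
  qed simp
  ultimately show "{w \<in> space borel. a \<le> radial_fun K w} \<in> sets borel"
    unfolding eq by blast
qed

lemma radial_fun_sphere_bounds:
  fixes K :: "'a::euclidean_space set"
  assumes K: "compact K" "0 \<in> interior K"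
  obtains a b where "0 < a" and "\<And>y. norm y = 1 \<Longrightarrow> a \<le> radial_fun K y \<and> radial_fun K y \<le> b"
proof -
  obtain e where e: "0 < e" "ball 0 e \<subseteq> K" using K(2) mem_interior by blast
  obtain B where B: "\<forall>x\<in>K. norm x \<le> B"
    using compact_imp_bounded[OF K(1)] bounded_iff by blast
  show ?thesis
  proof (rule that[of "e / 2" B])
    show "0 < e / 2" using e by simp
    fix y :: 'a assume y: "norm y = 1"
    then have "y \<noteq> 0" by auto
    have "(e / 2) *\<^sub>R y \<in> K" using e y by (intro subsetD[OF e(2)]) simp
    then have "e / 2 \<le> radial_fun K y" using le_radial_fun[OF K(1) \<open>y \<noteq> 0\<close>, of "e / 2"] e(1) by simp
    moreover have "norm (radial_fun K y *\<^sub>R y) \<le> B"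
      using B radial_fun_pos_mem(2)[OF K \<open>y \<noteq> 0\<close>] by blast
    ultimately show "e / 2 \<le> radial_fun K y \<and> radial_fun K y \<le> B"
      using y radial_fun_pos_mem(1)[OF K \<open>y \<noteq> 0\<close>] by simp
  qed
qed

lemma set_integrable_radial_fun_powr:
  fixes K :: "'a::euclidean_space set"
  assumes K: "compact K" "convex K" "0 \<in> interior K"
  shows "set_integrable lborel (ball 0 1) (\<lambda>x::'a. radial_fun K (x /\<^sub>R norm x) powr q)"
proof -
  obtain a b where a: "0 < a" and ab: "\<And>y. norm y = 1 \<Longrightarrow> a \<le> radial_fun K y \<and> radial_fun K y \<le> b"
    using radial_fun_sphere_bounds[OF K(1,3)] by blast
  define C where "C = \<bar>radial_fun K 0 powr q\<bar> + a powr q + b powr q"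
  have bound: "norm (radial_fun K (x /\<^sub>R norm x) powr q) \<le> C" for x :: 'a
  proof (cases "x = 0")
    case False
    then have r: "a \<le> radial_fun K (x /\<^sub>R norm x)" "radial_fun K (x /\<^sub>R norm x) \<le> b"
      using ab[of "x /\<^sub>R norm x"] by auto
    have "0 \<le> radial_fun K (x /\<^sub>R norm x)" using a r(1) by linarith
    consider "0 \<le> q" | "q < 0" by linarith
    then have "radial_fun K (x /\<^sub>R norm x) powr q \<le> a powr q + b powr q"
    proof cases
      case 1
      then show ?thesis
        using powr_mono2[OF 1 \<open>0 \<le> radial_fun K _\<close> r(2)] powr_ge_zero[of a q] by linarith
    next
      case 2
      then show ?thesis
        using powr_mono2'[OF less_imp_le[OF 2] a r(1)] powr_ge_zero[of b q] by linarith
    qed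
    then have "norm (radial_fun K (x /\<^sub>R norm x) powr q) \<le> a powr q + b powr q" by simp
    also have "\<dots> \<le> C" by (simp add: C_def)
    finally show ?thesis .
  qed (simp add: C_def add_nonneg_nonneg)
  moreover have "(\<lambda>x::'a. radial_fun K (x /\<^sub>R norm x) powr q) \<in> borel_measurable lborel"
    using radial_fun_borel_measurable[OF K] by measurable
  ultimately show ?thesis
    unfolding set_integrable_def
    by (intro integrableI_bounded_set_indicator[where B=C] emeasure_lborel_ball_finite AE_I2) (auto intro: bound)
qed

lemma set_integral_less:
  fixes f g :: "'a \<Rightarrow> real"
  assumes f: "set_integrable M A f" and g: "set_integrable M A g"
    and B: "B \<subseteq> A" "B \<in> sets M" "emeasure M B \<noteq> 0"
    and le: "\<And>x. x \<in> A \<Longrightarrow> f x \<le> g x" and less: "\<And>x. x \<in> B \<Longrightarrow> f x < g x"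
  shows "(LINT x:A|M. f x) < (LINT x:A|M. g x)"
proof -
  define F G where "F = (\<lambda>x. indicator A x *\<^sub>R f x)" and "G = (\<lambda>x. indicator A x *\<^sub>R g x)"
  have int: "integrable M F" "integrable M G"
    using f g unfolding set_integrable_def F_def G_def .
  have FG: "F x \<le> G x" for x using le by (simp add: F_def G_def indicator_def)
  have FG_less: "F x < G x" if "x \<in> B" for x
    using B(1) that less[OF that] by (auto simp: F_def G_def)
  have "integral\<^sup>L M F \<le> integral\<^sup>L M G" by (rule integral_mono[OF int FG])
  moreover have "integral\<^sup>L M F \<noteq> integral\<^sup>L M G"
  proof
    assume "integral\<^sup>L M F = integral\<^sup>L M G"
    then have "integral\<^sup>L M (\<lambda>x. G x - F x) = 0" using int by simp
    then have "AE x in M. G x - F x = 0"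
      using integral_nonneg_eq_0_iff_AE[OF Bochner_Integration.integrable_diff[OF int(2,1)]] FG
      by simp
    then have "AE x in M. x \<notin> B"
      by (rule eventually_mono) (use FG_less in force)
    moreover have "{x \<in> space M. \<not> x \<notin> B} = B" using sets.sets_into_space[OF B(2)] by auto
    ultimately show False using AE_iff_measurable[OF B(2)] B(3) by simp
  qed
  moreover have "(LINT x:A|M. f x) = integral\<^sup>L M F" "(LINT x:A|M. g x) = integral\<^sup>L M G"
    unfolding set_lebesgue_integral_def F_def G_def by (rule refl)+
  ultimately show ?thesis by simp
qed

lemma set_integral_lborel_less:
  fixes f g :: "'a::euclidean_space \<Rightarrow> real"
  assumes "set_integrable lborel A f" and "set_integrable lborel A g"
    and "ball c d \<subseteq> A" and "0 < d"
    and "\<And>x. x \<in> A \<Longrightarrow> f x \<le> g x" and "\<And>x. x \<in> ball c d \<Longrightarrow> f x < g x"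
  shows "(LINT x:A|lborel. f x) < (LINT x:A|lborel. g x)"
proof (rule set_integral_less[OF assms(1-3) _ _ assms(5,6)])
  show "emeasure lborel (ball c d) \<noteq> 0"
  proof
    assume "emeasure lborel (ball c d) = 0"
    then have "measure lborel (ball c d) = 0" by (simp add: measure_def)
    then show False using content_ball_pos[OF assms(4), of c] by simp
  qed
qed simp

lemma subset_if_interior_subset:
  fixes K L :: "'a::euclidean_space set"
  assumes "closed K" "closed L" "convex L" "interior L \<noteq> {}" "interior L \<subseteq> K"
  shows "L \<subseteq> K"
proof -
  have "L = closure (interior L)" using convex_closure_interior[OF assms(3,4)] assms(2) by simp
  also have "\<dots> \<subseteq> K" using closure_minimal[OF assms(5,1)] .
  finally show ?thesis .
qed

lemma ball_radial_fun_less: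
  fixes K1 K2 :: "'a::euclidean_space set"
  assumes K1: "compact K1" "convex K1" "0 \<in> interior K1" and K2: "compact K2" "convex K2"
    and sub: "K1 \<subseteq> K2" and ne: "K1 \<noteq> K2"
  obtains c d where "0 < d" and "ball c d \<subseteq> ball 0 1 - {0}"
    and "\<And>z. z \<in> ball c d \<Longrightarrow> radial_fun K1 (z /\<^sub>R norm z) < radial_fun K2 (z /\<^sub>R norm z)"
proof -
  have "interior K2 \<noteq> {}" using K1(3) interior_mono[OF sub] by blast
  have "\<not> interior K2 \<subseteq> K1"
  proof
    assume "interior K2 \<subseteq> K1"
    then have "K2 \<subseteq> K1"
      by (rule subset_if_interior_subset[OF compact_imp_closed[OF K1(1)]
            compact_imp_closed[OF K2(1)] K2(2) \<open>interior K2 \<noteq> {}\<close>])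
    then show False using sub ne by blast
  qed
  then obtain p where "p \<in> interior K2 - K1" by blast
  moreover have "open (interior K2 - K1)" using compact_imp_closed[OF K1(1)] by blast
  ultimately obtain \<delta> where \<delta>: "0 < \<delta>" "ball p \<delta> \<subseteq> interior K2 - K1"
    using open_contains_ball by blast
  \<comment> \<open>shrinking \<open>ball p \<delta>\<close> into the unit ball keeps its directions \<open>z /\<^sub>R norm z\<close>\<close>
  define c where "c = 1 / (norm p + \<delta>)"
  have c: "0 < c" using \<delta>(1) by (simp add: c_def add_nonneg_pos)
  have ball_eq: "ball (c *\<^sub>R p) (c * \<delta>) = (\<lambda>w. c *\<^sub>R w) ` ball p \<delta>"
    using ball_scale[of c p \<delta>] c by simp
  show ?thesis
  proof (rule that[of "c * \<delta>" "c *\<^sub>R p"])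
    show "0 < c * \<delta>" using c \<delta>(1) by simp
  next
    show "ball (c *\<^sub>R p) (c * \<delta>) \<subseteq> ball 0 1 - {0}"
    proof
      fix z assume "z \<in> ball (c *\<^sub>R p) (c * \<delta>)"
      then obtain w where w: "w \<in> ball p \<delta>" "z = c *\<^sub>R w" using ball_eq by auto
      then have "w \<noteq> 0" using \<delta>(2) K1(3) interior_subset by blast
      have "norm w < norm p + \<delta>"
        using w(1) norm_triangle_sub[of w p] by (simp add: dist_norm norm_minus_commute)
      then have "norm z < 1" using c w(2) by (simp add: c_def field_simps)
      then show "z \<in> ball 0 1 - {0}" using c w(2) \<open>w \<noteq> 0\<close> by simp
    qed
  next
    fix z assume "z \<in> ball (c *\<^sub>R p) (c * \<delta>)"
    then obtain w where w: "w \<in> ball p \<delta>" "z = c *\<^sub>R w" using ball_eq by auto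
    then have "w \<in> K2" "w \<notin> K1" using \<delta>(2) interior_subset by blast+
    moreover have "z /\<^sub>R norm z = w /\<^sub>R norm w" using c w(2) by simp
    ultimately show "radial_fun K1 (z /\<^sub>R norm z) < radial_fun K2 (z /\<^sub>R norm z)"
      using radial_fun_less_if_mem_diff[OF K1 K2(1)] by simp
  qed
qed

lemma Vq_strict_mono:
  fixes K1 K2 :: "'a::euclidean_space set"
  assumes K1: "compact K1" "convex K1" "0 \<in> interior K1" and K2: "compact K2" "convex K2"
    and sub: "K1 \<subseteq> K2" and ne: "K1 \<noteq> K2"
  shows "0 < q \<Longrightarrow> Vq q K1 < Vq q K2" and "q < 0 \<Longrightarrow> Vq q K2 < Vq q K1"
proof -
  have "0 \<in> interior K2" using interior_mono[OF sub] K1(3) by (rule subsetD)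
  obtain c d where d: "0 < d" "ball c d \<subseteq> ball 0 1 - {0}"
    and less: "\<And>z. z \<in> ball c d \<Longrightarrow> radial_fun K1 (z /\<^sub>R norm z) < radial_fun K2 (z /\<^sub>R norm z)"
    using ball_radial_fun_less[OF K1 K2 sub ne] by metis
  have pos: "0 < radial_fun K1 (z /\<^sub>R norm z)" if "z \<in> ball c d" for z
  proof -
    have "z \<noteq> 0" using d(2) that by blast
    then show ?thesis using radial_fun_pos_mem(1)[OF K1(1,3)] by simp
  qed
  have B: "ball c d \<subseteq> ball 0 1" using d(2) by blast
  note int1 = set_integrable_radial_fun_powr[OF K1, of q]
    and int2 = set_integrable_radial_fun_powr[OF K2 \<open>0 \<in> interior K2\<close>, of q]
  note mono = radial_fun_powr_mono[OF K1(1,3) K2(1) sub]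
  show "Vq q K1 < Vq q K2" if q: "0 < q"
  proof -
    have "(LINT x:ball 0 1|lborel. radial_fun K1 (x /\<^sub>R norm x) powr q)
        < (LINT x:ball 0 1|lborel. radial_fun K2 (x /\<^sub>R norm x) powr q)"
    proof (rule set_integral_lborel_less[OF int1 int2 B d(1)])
      show "radial_fun K1 (x /\<^sub>R norm x) powr q \<le> radial_fun K2 (x /\<^sub>R norm x) powr q" for x
        by (rule mono(1)[OF q])
      show "radial_fun K1 (x /\<^sub>R norm x) powr q < radial_fun K2 (x /\<^sub>R norm x) powr q"
        if "x \<in> ball c d" for x
        by (rule powr_less_mono2[OF q less_imp_le[OF pos[OF that]] less[OF that]])
    qed
    then show ?thesis unfolding Vq_def sphere_integral_def by simp
  qed
  show "Vq q K2 < Vq q K1" if q: "q < 0"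
  proof -
    have "(LINT x:ball 0 1|lborel. radial_fun K2 (x /\<^sub>R norm x) powr q)
        < (LINT x:ball 0 1|lborel. radial_fun K1 (x /\<^sub>R norm x) powr q)"
    proof (rule set_integral_lborel_less[OF int2 int1 B d(1)])
      show "radial_fun K2 (x /\<^sub>R norm x) powr q \<le> radial_fun K1 (x /\<^sub>R norm x) powr q" for x
        by (rule mono(2)[OF q])
      show "radial_fun K2 (x /\<^sub>R norm x) powr q < radial_fun K1 (x /\<^sub>R norm x) powr q"
        if "x \<in> ball c d" for x
        by (rule powr_less_mono2_neg[OF q pos[OF that] less[OF that]])
    qed
    then show ?thesis unfolding Vq_def sphere_integral_def by simp
  qed
qed

section \<open>Support functions and the functional \<open>F_minf\<close>\<close>

lemma bdd_above_inner_image: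
  fixes K :: "'a::euclidean_space set"
  assumes "compact K"
  shows "bdd_above ((\<lambda>x. x \<bullet> u) ` K)"
proof -
  obtain B where B: "\<forall>x\<in>K. norm x \<le> B"
    using compact_imp_bounded[OF assms] bounded_iff by blast
  have "x \<bullet> u \<le> B * norm u" if "x \<in> K" for x
    using norm_cauchy_schwarz[of x u] mult_right_mono[OF bspec[OF B that] norm_ge_zero[of u]]
    by linarith
  then show ?thesis by (intro bdd_aboveI2)
qed

lemma inner_le_support_fun:
  fixes K :: "'a::euclidean_space set"
  assumes "compact K" and "x \<in> K"
  shows "x \<bullet> u \<le> support_fun K u"
  unfolding support_fun_def by (rule cSUP_upper[OF assms(2) bdd_above_inner_image[OF assms(1)]])

lemma support_fun_le:
  fixes K :: "'a::euclidean_space set"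
  assumes "K \<noteq> {}" and "\<And>x. x \<in> K \<Longrightarrow> x \<bullet> u \<le> c"
  shows "support_fun K u \<le> c"
  unfolding support_fun_def using assms by (rule cSUP_least)

lemma support_fun_mono:
  fixes K :: "'a::euclidean_space set"
  assumes "K \<noteq> {}" and "K \<subseteq> L" and "compact L"
  shows "support_fun K u \<le> support_fun L u"
  using assms by (intro support_fun_le) (auto intro: inner_le_support_fun)

lemma support_fun_cball:
  fixes u :: "'a::euclidean_space"
  assumes "0 \<le> R" and "norm u = 1"
  shows "support_fun (cball 0 R) u = R"
proof (rule antisym)
  show "support_fun (cball 0 R) u \<le> R"
  proof (rule support_fun_le)
    show "x \<bullet> u \<le> R" if "x \<in> cball 0 R" for x
      using that assms(2) norm_cauchy_schwarz[of x u] by simp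
  qed (use assms(1) in simp)
  have "(R *\<^sub>R u) \<bullet> u \<le> support_fun (cball 0 R) u"
    using assms by (intro inner_le_support_fun) auto
  then show "R \<le> support_fun (cball 0 R) u" using assms(2) by (simp add: dot_square_norm)
qed

lemma continuous_on_support_fun:
  fixes K :: "'a::euclidean_space set"
  assumes "compact K" and "K \<noteq> {}"
  shows "continuous_on A (support_fun K)"
proof -
  obtain B where B: "0 < B" "\<forall>x\<in>K. norm x \<le> B"
    using compact_imp_bounded[OF assms(1)] bounded_pos by blast
  have L: "support_fun K u \<le> support_fun K v + B * norm (u - v)" for u v
  proof (rule support_fun_le[OF assms(2)])
    fix x assume x: "x \<in> K"
    have "x \<bullet> u = x \<bullet> v + x \<bullet> (u - v)" by (simp add: inner_diff_right)
    also have "x \<bullet> (u - v) \<le> B * norm (u - v)"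
      using norm_cauchy_schwarz[of x "u - v"] mult_right_mono[OF bspec[OF B(2) x] norm_ge_zero[of "u - v"]]
      by linarith
    also have "x \<bullet> v \<le> support_fun K v" by (rule inner_le_support_fun[OF assms(1) x])
    finally show "x \<bullet> u \<le> support_fun K v + B * norm (u - v)" by simp
  qed
  have "B-lipschitz_on A (support_fun K)"
  proof (rule lipschitz_onI)
    show "dist (support_fun K u) (support_fun K v) \<le> B * dist u v" for u v
      using L[of u v] L[of v u] by (simp add: dist_real_def dist_norm norm_minus_commute abs_le_iff)
  qed (use B(1) in simp)
  then show ?thesis by (rule lipschitz_on_continuous_on)
qed

definition min_support :: "'a::euclidean_space set \<Rightarrow> real" where
  "min_support K = Inf (support_fun K ` sphere 0 1)"

lemma min_support_le:
  fixes K :: "'a::euclidean_space set"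
  assumes "compact K" and "0 \<in> K" and "u \<in> sphere 0 1"
  shows "min_support K \<le> support_fun K u"
proof -
  have "bdd_below (support_fun K ` sphere 0 1)"
    using inner_le_support_fun[OF assms(1,2)] by (intro bdd_belowI2[of _ 0]) simp
  then show ?thesis unfolding min_support_def by (rule cInf_lower[OF imageI[OF assms(3)]])
qed

lemma min_support_greatest:
  fixes K :: "'a::euclidean_space set"
  assumes "\<And>u. u \<in> sphere 0 1 \<Longrightarrow> c \<le> support_fun K u"
  shows "c \<le> min_support K"
  unfolding min_support_def using assms by (intro cInf_greatest) auto

lemma min_support_pos:
  fixes K :: "'a::euclidean_space set"
  assumes "compact K" and "0 \<in> interior K"
  shows "0 < min_support K"
proof -
  obtain e where e: "0 < e" "ball 0 e \<subseteq> K" using assms(2) mem_interior by blast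
  have "e / 2 \<le> support_fun K u" if "u \<in> sphere 0 1" for u
  proof -
    have "(e / 2) *\<^sub>R u \<in> K" using e that by (intro subsetD[OF e(2)]) simp
    then have "((e / 2) *\<^sub>R u) \<bullet> u \<le> support_fun K u" by (rule inner_le_support_fun[OF assms(1)])
    then show ?thesis using that by (simp add: dot_square_norm)
  qed
  then have "e / 2 \<le> min_support K" by (rule min_support_greatest)
  then show ?thesis using e(1) by linarith
qed

lemma min_support_attained:
  fixes K :: "'a::euclidean_space set"
  assumes "compact K" and "K \<noteq> {}"
  obtains u where "u \<in> sphere 0 1" and "support_fun K u = min_support K"
proof -
  have "sphere (0::'a) 1 \<noteq> {}" by simp
  then obtain u where u: "u \<in> sphere 0 1" "\<forall>v\<in>sphere 0 1. support_fun K u \<le> support_fun K v"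
    using continuous_attains_inf[OF compact_sphere _ continuous_on_support_fun[OF assms]] by blast
  then have "min_support K = support_fun K u"
    unfolding min_support_def by (intro cInf_eq_minimum) auto
  then show ?thesis using that u(1) by simp
qed

lemma min_support_cball:
  assumes "0 \<le> R"
  shows "min_support (cball (0::'a::euclidean_space) R) = R"
proof -
  have "sphere (0::'a) 1 \<noteq> {}" by simp
  then obtain u :: 'a where u: "u \<in> sphere 0 1" by blast
  have "R \<in> support_fun (cball (0::'a) R) ` sphere 0 1"
    using u support_fun_cball[OF assms, of u] by (intro rev_image_eqI[OF u]) simp
  then have "support_fun (cball (0::'a) R) ` sphere 0 1 = {R}"
    using support_fun_cball[OF assms] by auto
  then show ?thesis unfolding min_support_def by simp
qed

lemma min_support_mono:
  fixes K L :: "'a::euclidean_space set"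
  assumes "compact K" "0 \<in> K" "K \<subseteq> L" "compact L"
  shows "min_support K \<le> min_support L"
proof (rule min_support_greatest)
  fix u :: 'a assume "u \<in> sphere 0 1"
  then have "min_support K \<le> support_fun K u" by (rule min_support_le[OF assms(1,2)])
  also have "\<dots> \<le> support_fun L u" using assms by (intro support_fun_mono) auto
  finally show "min_support K \<le> support_fun L u" .
qed

lemma cball_min_support_subset:
  fixes K :: "'a::euclidean_space set"
  assumes K: "compact K" "convex K" "0 \<in> K"
  shows "cball 0 (min_support K) \<subseteq> K"
proof
  fix z :: 'a assume z: "z \<in> cball 0 (min_support K)"
  show "z \<in> K"
  proof (rule ccontr)
    assume "z \<notin> K"
    then obtain a b where ab: "a \<bullet> z < b" "\<forall>x\<in>K. b < a \<bullet> x"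
      using separating_hyperplane_closed_point[OF K(2) compact_imp_closed[OF K(1)]] by blast
    have "a \<noteq> 0" using ab K(3) by force
    define u where "u = - a /\<^sub>R norm a"
    have u: "u \<in> sphere 0 1" using \<open>a \<noteq> 0\<close> by (simp add: u_def)
    have "support_fun K u \<le> - b / norm a"
    proof (rule support_fun_le)
      fix x assume "x \<in> K"
      then have "b < a \<bullet> x" using ab(2) by blast
      then show "x \<bullet> u \<le> - b / norm a"
        using \<open>a \<noteq> 0\<close> by (simp add: u_def inner_commute divide_simps)
    qed (use K(3) in blast)
    also have "\<dots> < z \<bullet> u" using ab(1) \<open>a \<noteq> 0\<close> by (simp add: u_def inner_commute divide_simps)
    also have "\<dots> \<le> norm z" using norm_cauchy_schwarz[of z u] u by simp
    also have "\<dots> \<le> min_support K" using z by simp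
    also have "\<dots> \<le> support_fun K u" by (rule min_support_le[OF K(1,3) u])
    finally show False by simp
  qed
qed

lemma F_minf_strict_mono:
  fixes K1 K2 :: "'a::euclidean_space set"
  assumes K1: "compact K1" "convex K1" "0 \<in> interior K1" and K2: "compact K2" "convex K2"
    and "K1 \<subseteq> K2" "K1 \<noteq> K2" and eq: "min_support K1 = min_support K2"
  shows "0 < q \<Longrightarrow> F_minf q K1 < F_minf q K2" and "q < 0 \<Longrightarrow> F_minf q K2 < F_minf q K1"
proof -
  have F: "F_minf q K = Vq q K / min_support K powr q" for K :: "'a set"
    unfolding F_minf_def min_support_def ..
  have pos: "0 < min_support K2 powr q" using min_support_pos[OF K1(1,3)] eq by simp
  show "F_minf q K1 < F_minf q K2" if "0 < q"
    unfolding F eq by (rule divide_strict_right_mono[OF Vq_strict_mono(1)[OF assms(1-7) that] pos])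
  show "F_minf q K2 < F_minf q K1" if "q < 0"
    unfolding F eq by (rule divide_strict_right_mono[OF Vq_strict_mono(2)[OF assms(1-7) that] pos])
qed

section \<open>Competitors in \<open>K\<^sub>0(S)\<close>\<close>

lemma K0D:
  assumes "K \<in> K0 S"
  shows "compact K" "convex K" "0 \<in> K" "interior K \<noteq> {}" "\<forall>\<phi>\<in>S. \<phi> ` K = K"
  using assms unfolding K0_def by auto

lemma cball_in_K0:
  assumes S: "orth_subgroup S" and "0 < R"
  shows "cball 0 R \<in> K0 S"
proof -
  have "\<phi> ` cball 0 R = cball 0 R" if "\<phi> \<in> S" for \<phi>
  proof -
    have \<phi>: "orthogonal_transformation \<phi>" by (rule orth_subgroupD(1)[OF S that])
    then have "\<phi> 0 = 0" by (simp add: orthogonal_transformation_linear linear_0)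
    then show ?thesis using image_orthogonal_transformation_cball[OF \<phi>] by simp
  qed
  then show ?thesis using assms(2) unfolding K0_def by auto
qed

text \<open>The orbit of the slab constraints \<open>\<bar>x \<bullet> b\<bar> \<le> B\<close> makes the set bounded without
  destroying its invariance.\<close>
definition orbit_polytope :: "('a::euclidean_space \<Rightarrow> 'a) set \<Rightarrow> 'a \<Rightarrow> real \<Rightarrow> real \<Rightarrow> 'a set" where
  "orbit_polytope S u r B = {x. \<forall>\<psi>\<in>S. x \<bullet> \<psi> u \<le> r \<and> (\<forall>b\<in>Basis. \<bar>x \<bullet> \<psi> b\<bar> \<le> B)}"

lemma orbit_polytope_eq_Inter:
  "orbit_polytope S u r B =
     (\<Inter>w\<in>orbit S u. {x. w \<bullet> x \<le> r}) \<inter>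
     (\<Inter>w\<in>(\<Union>b\<in>Basis. orbit S b \<union> uminus ` orbit S b). {x. w \<bullet> x \<le> B})"
  (is "_ = ?R")
proof (intro set_eqI iffI)
  fix x assume "x \<in> orbit_polytope S u r B"
  then show "x \<in> ?R" unfolding orbit_polytope_def orbit_def by (force simp: abs_le_iff inner_commute)
next
  fix x assume x: "x \<in> ?R"
  show "x \<in> orbit_polytope S u r B"
    unfolding orbit_polytope_def
  proof (intro CollectI ballI conjI)
    fix \<psi> assume \<psi>: "\<psi> \<in> S"
    then have "\<psi> u \<in> orbit S u" unfolding orbit_def by blast
    then show "x \<bullet> \<psi> u \<le> r" using x by (auto simp: inner_commute)
    fix b :: 'a assume "b \<in> Basis"
    then have "\<psi> b \<in> (\<Union>b\<in>Basis. orbit S b \<union> uminus ` orbit S b)"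
      and "- \<psi> b \<in> (\<Union>b\<in>Basis. orbit S b \<union> uminus ` orbit S b)"
      using \<psi> unfolding orbit_def by blast+
    then have "\<psi> b \<bullet> x \<le> B" "(- \<psi> b) \<bullet> x \<le> B" using x by blast+
    then show "\<bar>x \<bullet> \<psi> b\<bar> \<le> B" by (simp add: abs_le_iff inner_commute)
  qed
qed

lemma polytope_orbit_polytope:
  assumes S: "orth_subgroup S" and sp: "spanning_property S" and u: "u \<in> sphere 0 1"
  shows "polytope (orbit_polytope S u r B)"
proof -
  have halfspaces: "polyhedron (\<Inter>w\<in>W. {x. w \<bullet> x \<le> c})" if "finite W" for W :: "'a set" and c
    using that by (intro polyhedron_Inter) (auto simp: polyhedron_halfspace_le)
  have "finite (orbit S b)" if "b \<in> Basis" for b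
    using finite_orbit[OF S sp] that by simp
  then have "finite (\<Union>b\<in>Basis. orbit S b \<union> uminus ` orbit S b)" by simp
  then have "polyhedron (orbit_polytope S u r B)"
    unfolding orbit_polytope_eq_Inter by (intro polyhedron_Int halfspaces finite_orbit[OF S sp u])
  moreover have "bounded (orbit_polytope S u r B)" unfolding bounded_iff
  proof (intro exI ballI)
    fix x assume x: "x \<in> orbit_polytope S u r B"
    have "norm x \<le> (\<Sum>b\<in>Basis. \<bar>x \<bullet> b\<bar>)" by (rule norm_le_l1)
    also have "\<dots> \<le> of_nat DIM('a) * B"
      using x orth_subgroupD(2)[OF S] unfolding orbit_polytope_def by (intro sum_bounded_above) auto
    finally show "norm x \<le> of_nat DIM('a) * B" .
  qed
  ultimately show ?thesis by (simp add: polytope_eq_bounded_polyhedron)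
qed

lemma image_orbit_polytope:
  assumes S: "orth_subgroup S" and \<phi>: "\<phi> \<in> S"
  shows "\<phi> ` orbit_polytope S u r B = orbit_polytope S u r B"
proof (rule orth_subgroup_image_eq[OF S _ \<phi>])
  fix \<psi> x assume \<psi>: "\<psi> \<in> S" and x: "x \<in> orbit_polytope S u r B"
  have inner: "\<psi> x \<bullet> \<theta> v = x \<bullet> (inv \<psi> \<circ> \<theta>) v" for \<theta> v
    using orthogonal_transformation_inner_inv[OF orth_subgroupD(1)[OF S \<psi>]] by simp
  show "\<psi> x \<in> orbit_polytope S u r B"
    unfolding orbit_polytope_def
  proof (intro CollectI ballI)
    fix \<theta> assume "\<theta> \<in> S"
    then have "inv \<psi> \<circ> \<theta> \<in> S" using orth_subgroupD(3,4)[OF S] \<psi> by blast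
    then show "\<psi> x \<bullet> \<theta> u \<le> r \<and> (\<forall>b\<in>Basis. \<bar>\<psi> x \<bullet> \<theta> b\<bar> \<le> B)"
      using x unfolding orbit_polytope_def inner by blast
  qed
qed

lemma subset_orbit_polytope:
  assumes S: "orth_subgroup S" and inv: "\<forall>\<phi>\<in>S. \<phi> ` K \<subseteq> K" and "compact K"
    and B: "\<forall>x\<in>K. norm x \<le> B"
  shows "K \<subseteq> orbit_polytope S u (support_fun K u) B"
proof
  fix x assume x: "x \<in> K"
  show "x \<in> orbit_polytope S u (support_fun K u) B"
    unfolding orbit_polytope_def
  proof (intro CollectI ballI conjI)
    fix \<psi> assume "\<psi> \<in> S"
    then have \<psi>: "orthogonal_transformation \<psi>" "inv \<psi> \<in> S" by (simp_all add: orth_subgroupD[OF S])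
    have "x \<bullet> \<psi> u = inv \<psi> x \<bullet> u"
      using orthogonal_transformation_inner_inv[OF \<psi>(1), of u x] by (simp add: inner_commute)
    also have "\<dots> \<le> support_fun K u"
      using inv \<psi>(2) x by (intro inner_le_support_fun[OF \<open>compact K\<close>]) blast
    finally show "x \<bullet> \<psi> u \<le> support_fun K u" .
    fix b :: 'a assume "b \<in> Basis"
    then have "norm (\<psi> b) = 1" using orthogonal_transformation_norm[OF \<psi>(1)] by simp
    then show "\<bar>x \<bullet> \<psi> b\<bar> \<le> B" using Cauchy_Schwarz_ineq2[of x "\<psi> b"] B x by auto
  qed
qed

lemma support_fun_orbit_polytope_le:
  assumes S: "orth_subgroup S" and ne: "orbit_polytope S u r B \<noteq> {}"
  shows "support_fun (orbit_polytope S u r B) u \<le> r"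
proof (rule support_fun_le[OF ne])
  fix x assume "x \<in> orbit_polytope S u r B"
  then have "x \<bullet> id u \<le> r" using orth_subgroupD(2)[OF S] unfolding orbit_polytope_def by blast
  then show "x \<bullet> u \<le> r" by simp
qed

lemma K0_eq_if_F_minf_le:
  assumes S: "orth_subgroup S" and sp: "spanning_property S" and K: "K \<in> K0 S" and L: "L \<in> K0 S"
    and sub: "K \<subseteq> L" and eq: "min_support K = min_support L"
  shows "0 < q \<Longrightarrow> F_minf q L \<le> F_minf q K \<Longrightarrow> K = L"
    and "q < 0 \<Longrightarrow> F_minf q K \<le> F_minf q L \<Longrightarrow> K = L"
proof -
  note strict = F_minf_strict_mono[OF K0D(1,2)[OF K] zero_in_interior_K0[OF S sp K] K0D(1,2)[OF L]
      sub _ eq]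
  show "0 < q \<Longrightarrow> F_minf q L \<le> F_minf q K \<Longrightarrow> K = L"
    using strict(1) by fastforce
  show "q < 0 \<Longrightarrow> F_minf q K \<le> F_minf q L \<Longrightarrow> K = L"
    using strict(2) by fastforce
qed

text \<open>The polytope cut out by the supporting half-spaces of \<open>\<Omega>\<close> in the orbit of a direction
  where \<open>h\<^sub>\<Omega>\<close> is minimal.\<close>
lemma K0_polytope_superset:
  assumes S: "orth_subgroup S" and sp: "spanning_property S" and \<Omega>: "\<Omega> \<in> K0 S"
  obtains P where "P \<in> K0 S" "polytope P" "\<Omega> \<subseteq> P" "min_support P = min_support \<Omega>"
proof -
  note K = K0D[OF \<Omega>]
  obtain u where u: "u \<in> sphere 0 1" "support_fun \<Omega> u = min_support \<Omega>"
    using min_support_attained[OF K(1)] K(3) by blast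
  obtain B where B: "\<forall>x\<in>\<Omega>. norm x \<le> B"
    using compact_imp_bounded[OF K(1)] bounded_iff by blast
  define P where "P = orbit_polytope S u (min_support \<Omega>) B"
  have "\<Omega> \<subseteq> P"
    using subset_orbit_polytope[OF S _ K(1) B, of u] K(5) u(2) unfolding P_def by simp
  have "polytope P" unfolding P_def by (rule polytope_orbit_polytope[OF S sp u(1)])
  then have P: "compact P" "convex P" by (simp_all add: polytope_imp_compact polytope_imp_convex)
  have "P \<in> K0 S"
    unfolding K0_def using P \<open>\<Omega> \<subseteq> P\<close> interior_mono[OF \<open>\<Omega> \<subseteq> P\<close>] K(3,4)
    by (auto simp: P_def image_orbit_polytope[OF S])
  have "min_support P \<le> support_fun P u"
    using min_support_le[OF P(1) _ u(1)] K(3) \<open>\<Omega> \<subseteq> P\<close> by blast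
  also have "\<dots> \<le> min_support \<Omega>"
    unfolding P_def using K(3) \<open>\<Omega> \<subseteq> P\<close> by (intro support_fun_orbit_polytope_le[OF S]) (auto simp: P_def)
  finally have "min_support P = min_support \<Omega>"
    using min_support_mono[OF K(1,3) \<open>\<Omega> \<subseteq> P\<close> P(1)] by simp
  then show ?thesis using that \<open>P \<in> K0 S\<close> \<open>polytope P\<close> \<open>\<Omega> \<subseteq> P\<close> by blast
qed

theorem lemma6p2:
  fixes S :: "('a::euclidean_space \<Rightarrow> 'a) set" and \<Omega> :: "'a set" and q :: real
  assumes "DIM('a) \<ge> 2"
    and "orth_subgroup S" and "discrete_orth S" and "spanning_property S"
    and "q \<noteq> 0"
    and "\<Omega> \<in> K0 S" and "\<forall>K\<in>K0 S. F_minf q K \<le> F_minf q \<Omega>"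
  shows "(q > 0 \<longrightarrow> polytope \<Omega>) \<and> (q < 0 \<longrightarrow> (\<exists>R>0. \<Omega> = cball 0 R))"
proof -
  note S = assms(2) and sp = assms(4) and \<Omega> = assms(6) and max = assms(7)
  note K = K0D[OF \<Omega>]
  define \<rho> where "\<rho> = min_support \<Omega>"
  have \<rho>: "0 < \<rho>" unfolding \<rho>_def by (rule min_support_pos[OF K(1) zero_in_interior_K0[OF S sp \<Omega>]])
  have "cball 0 \<rho> = \<Omega>" if "q < 0"
  proof (rule K0_eq_if_F_minf_le(2)[OF S sp cball_in_K0[OF S \<rho>] \<Omega> _ _ that])
    show "cball 0 \<rho> \<subseteq> \<Omega>" unfolding \<rho>_def by (rule cball_min_support_subset[OF K(1-3)])
    show "min_support (cball 0 \<rho>) = min_support \<Omega>"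
      using min_support_cball[of \<rho>] \<rho> unfolding \<rho>_def by simp
    show "F_minf q (cball (0::'a) \<rho>) \<le> F_minf q \<Omega>" using max cball_in_K0[OF S \<rho>] by blast
  qed
  moreover have "polytope \<Omega>" if "0 < q"
  proof -
    obtain P where P: "P \<in> K0 S" "polytope P" "\<Omega> \<subseteq> P" "min_support P = min_support \<Omega>"
      by (rule K0_polytope_superset[OF S sp \<Omega>])
    have "\<Omega> = P"
      using K0_eq_if_F_minf_le(1)[OF S sp \<Omega> P(1) P(3) P(4)[symmetric] that] max P(1) by blast
    then show ?thesis using P(2) by simp
  qed
  ultimately show ?thesis using \<rho> by auto
qed

end
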